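(* If $G$ is a graph on $n$ vertices with minimum degree $\delta(G)\ge 2$, then $\gamma_{\rm tg}(G)\le \frac{3}{4}n$.
   Context: For a graph $G$ without isolated vertices, a vertex $x$ totally dominates a vertex $y$ if $x$ and $y$ are adjacent. The total domination game on $G$ is played by two players, Dominator and Staller, who alternately choose vertices of $G$, Dominator choosing first. A vertex may be chosen only if it totally dominates at least one vertex that is not totally dominated by the previously chosen vertices. The game ends when the set of chosen vertices is a total dominating set of $G$, i.e. every vertex of $G$ has a neighbor among the chosen vertices. Dominator wants to minimize the number of chosen vertices and Staller wants to maximize it. The game total domination number $\gamma_{\rm tg}(G)$ is the number of vertices chosen when Dominator starts and both players play optimally. *)

theory Defs
  imports Main
begin

definition simple_graph :: "'a set \<Rightarrow> ('a \<Rightarrow> 'a \<Rightarrow> bool) \<Rightarrow> bool" where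
  "simple_graph V E \<longleftrightarrow> finite V \<and> (\<forall>x y. E x y \<longrightarrow> x \<in> V \<and> y \<in> V)
     \<and> (\<forall>x y. E x y \<longrightarrow> E y x) \<and> (\<forall>x. \<not> E x x)"

definition degree :: "'a set \<Rightarrow> ('a \<Rightarrow> 'a \<Rightarrow> bool) \<Rightarrow> 'a \<Rightarrow> nat" where
  "degree V E v = card {u \<in> V. E v u}"

definition tdominated :: "'a set \<Rightarrow> ('a \<Rightarrow> 'a \<Rightarrow> bool) \<Rightarrow> 'a set \<Rightarrow> 'a set" where
  "tdominated V E D = {y \<in> V. \<exists>x\<in>D. E x y}"

definition is_tds :: "'a set \<Rightarrow> ('a \<Rightarrow> 'a \<Rightarrow> bool) \<Rightarrow> 'a set \<Rightarrow> bool" where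
  "is_tds V E D \<longleftrightarrow> tdominated V E D = V"

definition legal_moves :: "'a set \<Rightarrow> ('a \<Rightarrow> 'a \<Rightarrow> bool) \<Rightarrow> 'a set \<Rightarrow> 'a set" where
  "legal_moves V E D = {x \<in> V. \<exists>y\<in>V. E x y \<and> y \<notin> tdominated V E D}"

text \<open>Optimal-play value of the remaining game from position D (number of further moves),
  with the player to move given by the boolean (True = Dominator, minimising;
  False = Staller, maximising). The first argument is fuel; every move totally dominates
  a new vertex, so fuel card V always suffices.\<close>
fun game_val :: "nat \<Rightarrow> 'a set \<Rightarrow> ('a \<Rightarrow> 'a \<Rightarrow> bool) \<Rightarrow> bool \<Rightarrow> 'a set \<Rightarrow> nat" where
  "game_val 0 V E p D = 0"
| "game_val (Suc k) V E p D =
     (if is_tds V E D then 0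
      else if p then Min ((\<lambda>x. Suc (game_val k V E False (insert x D))) ` legal_moves V E D)
      else Max ((\<lambda>x. Suc (game_val k V E True (insert x D))) ` legal_moves V E D))"

definition gamma_tg :: "'a set \<Rightarrow> ('a \<Rightarrow> 'a \<Rightarrow> bool) \<Rightarrow> nat" where
  "gamma_tg V E = game_val (card V) V E True {}"

end

theory Submission
  imports Defs
begin

text \<open>Let U be the set of vertices not yet totally dominated and R the set of legal moves, and
  consider the potential 2|U| + |R|, which is at most 3n at the start. Every move x removes its
  neighbours in U from U and x itself from R, so the potential drops by at least 3. Call U thin
  when no vertex has two neighbours in U and every vertex of U has at most two neighbours; then,
  as the minimum degree is 2, the unique new target y of a move has exactly two neighbours, both
  of which lose their last target, and the potential drops by at least 4. Dominator can always
  drop it by 4, and by 5 unless U stays thin. Hence every two consecutive moves decrease the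
  potential by at least 8, and 4 gamma_tg \<le> 3n.\<close>

definition undominated :: "'a set \<Rightarrow> ('a \<Rightarrow> 'a \<Rightarrow> bool) \<Rightarrow> 'a set \<Rightarrow> 'a set" where
  "undominated V E D = V - tdominated V E D"

definition potential :: "'a set \<Rightarrow> ('a \<Rightarrow> 'a \<Rightarrow> bool) \<Rightarrow> 'a set \<Rightarrow> nat" where
  "potential V E D = 2 * card (undominated V E D) + card (legal_moves V E D)"

definition thin :: "'a set \<Rightarrow> ('a \<Rightarrow> 'a \<Rightarrow> bool) \<Rightarrow> 'a set \<Rightarrow> bool" where
  "thin V E U \<longleftrightarrow> (\<forall>x\<in>V. \<forall>y\<in>U. \<forall>y'\<in>U. E x y \<longrightarrow> E x y' \<longrightarrow> y = y')
     \<and> (\<forall>y\<in>U. card {x\<in>V. E x y} \<le> 2)"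

lemma legal_moves_eq: "legal_moves V E D = {x\<in>V. \<exists>y\<in>undominated V E D. E x y}"
  unfolding legal_moves_def undominated_def tdominated_def by auto

lemma undominated_insert: "undominated V E (insert x D) = {y \<in> undominated V E D. \<not> E x y}"
  unfolding undominated_def tdominated_def by auto

lemma undominated_subset: "undominated V E D \<subseteq> V"
  unfolding undominated_def by auto

lemma legal_moves_subset: "legal_moves V E D \<subseteq> V"
  unfolding legal_moves_def by auto

lemma legal_moves_insert_subset: "legal_moves V E (insert x D) \<subseteq> legal_moves V E D"
  unfolding legal_moves_eq undominated_insert by auto

lemma not_legal_after_own_move: "x \<notin> legal_moves V E (insert x D)"
  unfolding legal_moves_eq undominated_insert by auto

lemma thin_insert: "thin V E (undominated V E D) \<Longrightarrow> thin V E (undominated V E (insert x D))"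
  unfolding thin_def undominated_insert by auto

lemma finite_undominated: "finite V \<Longrightarrow> finite (undominated V E D)"
  using finite_subset[OF undominated_subset] .

lemma finite_legal_moves: "finite V \<Longrightarrow> finite (legal_moves V E D)"
  using finite_subset[OF legal_moves_subset] .

lemma thin_unique:
  "thin V E U \<Longrightarrow> x \<in> V \<Longrightarrow> y \<in> U \<Longrightarrow> y' \<in> U \<Longrightarrow> E x y \<Longrightarrow> E x y' \<Longrightarrow> y = y'"
  unfolding thin_def by blast

lemma potential_le_three_card:
  assumes "finite V"
  shows "potential V E D \<le> 3 * card V"
proof -
  have "card (undominated V E D) \<le> card V" "card (legal_moves V E D) \<le> card V"
    by (rule card_mono[OF assms undominated_subset], rule card_mono[OF assms legal_moves_subset])
  then show ?thesis
    unfolding potential_def by simp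
qed

lemma potential_drop:
  assumes "finite V" and x: "x \<in> legal_moves V E D"
    and Z: "Z \<subseteq> legal_moves V E D" "Z \<inter> legal_moves V E (insert x D) = {}"
  shows "potential V E (insert x D) + 2 * card {y\<in>undominated V E D. E x y} + card Z
           \<le> potential V E D"
proof -
  let ?U = "undominated V E D" and ?U' = "undominated V E (insert x D)"
  let ?T = "{y\<in>undominated V E D. E x y}"
  let ?R = "legal_moves V E D" and ?R' = "legal_moves V E (insert x D)"
  have fin_U: "finite ?U'" "finite ?T"
    using finite_undominated[OF assms(1), of E D] by (auto simp: undominated_insert)
  have fin_R: "finite ?R'" "finite Z" "finite ?R"
    using finite_legal_moves[OF assms(1), of E D] finite_legal_moves[OF assms(1), of E "insert x D"]
      finite_subset[OF Z(1)] by auto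
  have "?U' \<union> ?T = ?U"
    by (auto simp: undominated_insert)
  moreover have "card (?U' \<union> ?T) = card ?U' + card ?T"
    using fin_U by (rule card_Un_disjoint) (auto simp: undominated_insert)
  ultimately have card_U: "card ?U = card ?U' + card ?T"
    by simp
  have "card ?R' + card Z = card (?R' \<union> Z)"
    using card_Un_disjoint[OF fin_R(1,2)] Z(2) by (simp add: Int_commute)
  also have "\<dots> \<le> card ?R"
    using fin_R(3) Z(1) legal_moves_insert_subset[of V E x D] by (intro card_mono) auto
  finally show ?thesis
    unfolding potential_def using card_U by simp
qed

lemma card_targets_pos:
  assumes "finite V" "x \<in> legal_moves V E D"
  shows "1 \<le> card {y\<in>undominated V E D. E x y}"
proof -
  have "finite {y\<in>undominated V E D. E x y}"
    using finite_undominated[OF assms(1)] by simp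
  moreover have "{y\<in>undominated V E D. E x y} \<noteq> {}"
    using assms(2) unfolding legal_moves_eq by auto
  ultimately show ?thesis
    by (simp add: Suc_le_eq card_gt_0_iff)
qed

lemma potential_drop_three:
  assumes "finite V" "x \<in> legal_moves V E D"
  shows "potential V E (insert x D) + 3 \<le> potential V E D"
proof -
  have "potential V E (insert x D) + 2 * card {y\<in>undominated V E D. E x y} + card {x}
      \<le> potential V E D"
    using assms(2) not_legal_after_own_move[of x V E D] by (intro potential_drop[OF assms]) auto
  with card_targets_pos[OF assms] show ?thesis
    by simp
qed

text \<open>If every vertex of Z sees y as its only undominated neighbour, dominating y makes
  all of Z illegal.\<close>

lemma potential_drop_private_target:
  assumes "finite V" and x: "x \<in> legal_moves V E D"
    and y: "y \<in> undominated V E D" "E x y"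
    and Z: "Z \<subseteq> {z\<in>V. E z y}" "\<forall>z\<in>Z. \<forall>y'\<in>undominated V E D. E z y' \<longrightarrow> y' = y"
  shows "potential V E (insert x D) + 2 + card Z \<le> potential V E D"
proof -
  have "Z \<subseteq> legal_moves V E D"
    using Z(1) y(1) unfolding legal_moves_eq by auto
  moreover have "Z \<inter> legal_moves V E (insert x D) = {}"
    using Z y(2) unfolding legal_moves_eq undominated_insert by auto
  ultimately have "potential V E (insert x D) + 2 * card {y\<in>undominated V E D. E x y} + card Z
      \<le> potential V E D"
    by (rule potential_drop[OF assms(1) x])
  with card_targets_pos[OF assms(1) x] show ?thesis
    by linarith
qed

context
  fixes V :: "'a set" and E :: "'a \<Rightarrow> 'a \<Rightarrow> bool"
  assumes finite: "finite V"
    and in_degree: "\<forall>y\<in>V. 2 \<le> card {x\<in>V. E x y}"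
begin

lemma two_le_card_in_neighbours: "y \<in> undominated V E D \<Longrightarrow> 2 \<le> card {x\<in>V. E x y}"
  using in_degree unfolding undominated_def by simp

lemma legal_moves_nonempty:
  assumes "\<not> is_tds V E D"
  shows "legal_moves V E D \<noteq> {}"
proof -
  obtain y where y: "y \<in> undominated V E D"
    using assms unfolding is_tds_def undominated_def tdominated_def by auto
  then have "{x\<in>V. E x y} \<noteq> {}"
    using two_le_card_in_neighbours[of y D] by (intro notI) simp
  with y show ?thesis
    unfolding legal_moves_eq by auto
qed

lemma potential_drop_thin:
  assumes x: "x \<in> legal_moves V E D" and thin: "thin V E (undominated V E D)"
  shows "potential V E (insert x D) + 4 \<le> potential V E D"
proof -
  obtain y where y: "y \<in> undominated V E D" "E x y"
    using x unfolding legal_moves_eq by auto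
  obtain Z where Z: "Z \<subseteq> {z\<in>V. E z y}" "card Z = 2"
    using obtain_subset_with_card_n[OF two_le_card_in_neighbours[OF y(1)]] by blast
  have "\<forall>z\<in>Z. \<forall>y'\<in>undominated V E D. E z y' \<longrightarrow> y' = y"
  proof (intro ballI impI)
    fix z y' assume "z \<in> Z" "y' \<in> undominated V E D" "E z y'"
    with Z(1) y(1) show "y' = y"
      using thin_unique[OF thin] by blast
  qed
  with potential_drop_private_target[OF finite x y Z(1)] Z(2) show ?thesis
    by simp
qed

lemma dominator_move:
  assumes "\<not> is_tds V E D"
  shows "\<exists>x\<in>legal_moves V E D. potential V E (insert x D) + 4
           + (if thin V E (undominated V E (insert x D)) then 0 else 1) \<le> potential V E D"
proof -
  let ?U = "undominated V E D"
  consider (double) x y y' where "x \<in> V" "y \<in> ?U" "y' \<in> ?U" "y \<noteq> y'" "E x y" "E x y'"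
    | (thin) "thin V E ?U"
    | (crowded) y where "y \<in> ?U" "2 < card {x\<in>V. E x y}"
        "\<forall>x\<in>V. \<forall>y\<in>?U. \<forall>y'\<in>?U. E x y \<longrightarrow> E x y' \<longrightarrow> y = y'"
  proof (cases "\<forall>x\<in>V. \<forall>y\<in>?U. \<forall>y'\<in>?U. E x y \<longrightarrow> E x y' \<longrightarrow> y = y'")
    case unique: True
    show ?thesis
    proof (cases "thin V E ?U")
      case False
      with unique obtain y where "y \<in> ?U" "2 < card {x\<in>V. E x y}"
        unfolding thin_def by (auto simp: not_le)
      with unique that(3) show ?thesis by blast
    qed (use that(2) in blast)
  qed (use that(1) in blast)
  then show ?thesis
  proof cases
    case double
    then have x: "x \<in> legal_moves V E D"
      unfolding legal_moves_eq by auto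
    have "card {y, y'} \<le> card {y\<in>?U. E x y}"
      using double finite_undominated[OF finite, of E D] by (intro card_mono) auto
    moreover have "potential V E (insert x D) + 2 * card {y\<in>?U. E x y} + card {x}
        \<le> potential V E D"
      using x not_legal_after_own_move[of x V E D] by (intro potential_drop[OF finite x]) auto
    ultimately show ?thesis
      using double(4) by (intro bexI[OF _ x]) simp
  next
    case thin
    obtain x where x: "x \<in> legal_moves V E D"
      using legal_moves_nonempty[OF assms] by auto
    then show ?thesis
      using potential_drop_thin[OF x thin] thin_insert[OF thin] by (intro bexI[OF _ x]) simp
  next
    case crowded
    then have "{x\<in>V. E x y} \<noteq> {}"
      by (metis card.empty not_less0)
    then obtain x where x: "x \<in> V" "E x y"
      by blast
    then have x_legal: "x \<in> legal_moves V E D"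
      using crowded(1) unfolding legal_moves_eq by auto
    have "potential V E (insert x D) + 2 + card {z\<in>V. E z y} \<le> potential V E D"
      using crowded by (intro potential_drop_private_target[OF finite x_legal crowded(1) x(2)]) auto
    with crowded(2) show ?thesis
      by (intro bexI[OF _ x_legal]) auto
  qed
qed

text \<open>The extra unit is prepaid by a Dominator move that leaves U non-thin: only then can the
  following Staller move drop the potential by as little as 3.\<close>

lemma game_val_potential_bound:
  "4 * game_val k V E p D \<le> potential V E D + (if p \<or> thin V E (undominated V E D) then 0 else 1)"
proof (induction k arbitrary: p D)
  case 0
  then show ?case by simp
next
  case (Suc k)
  let ?R = "legal_moves V E D"
  have fin: "finite ?R"
    using finite_legal_moves[OF finite] .
  show ?case
  proof (cases "is_tds V E D")
    case True
    then show ?thesis by simp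
  next
    case not_tds: False
    show ?thesis
    proof (cases p)
      case True
      obtain x where x: "x \<in> ?R" and drop: "potential V E (insert x D) + 4
          + (if thin V E (undominated V E (insert x D)) then 0 else 1) \<le> potential V E D"
        using dominator_move[OF not_tds] by blast
      have "Min ((\<lambda>x. Suc (game_val k V E False (insert x D))) ` ?R)
              \<le> Suc (game_val k V E False (insert x D))"
        using fin x by (intro Min_le) auto
      then show ?thesis
        using Suc.IH[of False "insert x D"] not_tds True drop by simp
    next
      case False
      have "Max ((\<lambda>x. Suc (game_val k V E True (insert x D))) ` ?R)
          \<in> (\<lambda>x. Suc (game_val k V E True (insert x D))) ` ?R"
        using fin legal_moves_nonempty[OF not_tds] by (intro Max_in) auto
      then obtain x where x: "x \<in> ?R" and max: "Max ((\<lambda>x. Suc (game_val k V E True (insert x D))) ` ?R)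
          = Suc (game_val k V E True (insert x D))"
        by auto
      have "potential V E (insert x D) + 3 + (if thin V E (undominated V E D) then 1 else 0)
              \<le> potential V E D"
        using potential_drop_three[OF finite x] potential_drop_thin[OF x] by auto
      then show ?thesis
        using Suc.IH[of True "insert x D"] not_tds False max by auto
    qed
  qed
qed

end

lemma in_degree_eq_degree:
  assumes "simple_graph V E"
  shows "card {x\<in>V. E x y} = degree V E y"
proof -
  have "{x\<in>V. E x y} = {u\<in>V. E y u}"
    using assms unfolding simple_graph_def by blast
  then show ?thesis
    unfolding degree_def by simp
qed

theorem corollary3:
  fixes V :: "'a set" and E :: "'a \<Rightarrow> 'a \<Rightarrow> bool"
  assumes "simple_graph V E"
    and "\<forall>v\<in>V. degree V E v \<ge> 2"
  shows "4 * gamma_tg V E \<le> 3 * card V"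
proof -
  have finite: "finite V"
    using assms(1) unfolding simple_graph_def by simp
  have in_degree: "\<forall>y\<in>V. 2 \<le> card {x\<in>V. E x y}"
    using assms(2) in_degree_eq_degree[OF assms(1)] by simp
  have "4 * gamma_tg V E \<le> potential V E {}"
    using game_val_potential_bound[OF finite in_degree, where k = "card V" and p = True and D = "{}"]
    unfolding gamma_tg_def by simp
  also have "\<dots> \<le> 3 * card V"
    using potential_le_three_card[OF finite] .
  finally show ?thesis .
qed

end
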